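(* For compact sets $K_1,\ldots,K_d\subset\mathbb C$, \[ R(K_1\times\cdots\times K_d)=R(K_1)\otimes\cdots\otimes R(K_d), \] where the right-hand side denotes the closure in $C(K_1\times\cdots\times K_d)$ of the set of finite sums of finite products of functions of the form $(z_1,\ldots,z_d)\mapsto g(z_i)$ with $g\in R(K_i)$, $i=1,\ldots,d$.
   Context: For a compact set $K\subset\mathbb C^d$, $C(K)$ is the algebra of continuous complex functions on $K$ with the supremum norm, and $R(K)$ is the closure in $C(K)$ of the set of rational functions with no singular points on $K$. *)

theory Defs
  imports "HOL-Analysis.Analysis" "HOL-Computational_Algebra.Polynomial"
begin

definition sup_closure_on :: "'a::topological_space set \<Rightarrow> ('a \<Rightarrow> complex) set \<Rightarrow> ('a \<Rightarrow> complex) set" where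
  "sup_closure_on K S = {f. continuous_on K f \<and>
     (\<forall>e>0. \<exists>g\<in>S. \<forall>z\<in>K. norm (f z - g z) < e)}"

text \<open>Polynomial functions on C^d (d = CARD('n)): the ring of functions generated by
  constants and coordinate functions.\<close>
inductive_set mpoly_fun :: "(complex ^ 'n \<Rightarrow> complex) set" where
  const: "(\<lambda>z. c) \<in> mpoly_fun"
| coord: "(\<lambda>z. z $ i) \<in> mpoly_fun"
| add: "p \<in> mpoly_fun \<Longrightarrow> q \<in> mpoly_fun \<Longrightarrow> (\<lambda>z. p z + q z) \<in> mpoly_fun"
| mult: "p \<in> mpoly_fun \<Longrightarrow> q \<in> mpoly_fun \<Longrightarrow> (\<lambda>z. p z * q z) \<in> mpoly_fun"

definition rat_on :: "(complex ^ 'n) set \<Rightarrow> (complex ^ 'n \<Rightarrow> complex) set" where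
  "rat_on K = {f. \<exists>p q. p \<in> mpoly_fun \<and> q \<in> mpoly_fun \<and> (\<forall>z\<in>K. q z \<noteq> 0) \<and> f = (\<lambda>z. p z / q z)}"

definition R_multi :: "(complex ^ 'n) set \<Rightarrow> (complex ^ 'n \<Rightarrow> complex) set" where
  "R_multi K = sup_closure_on K (rat_on K)"

definition rat_on1 :: "complex set \<Rightarrow> (complex \<Rightarrow> complex) set" where
  "rat_on1 K = {f. \<exists>p q :: complex poly. (\<forall>z\<in>K. poly q z \<noteq> 0) \<and> f = (\<lambda>z. poly p z / poly q z)}"

definition R_one :: "complex set \<Rightarrow> (complex \<Rightarrow> complex) set" where
  "R_one K = sup_closure_on K (rat_on1 K)"

inductive_set tensor_gen :: "('n \<Rightarrow> complex set) \<Rightarrow> (complex ^ 'n \<Rightarrow> complex) set"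
  for K :: "'n \<Rightarrow> complex set" where
  gen: "g \<in> R_one (K i) \<Longrightarrow> (\<lambda>z. g (z $ i)) \<in> tensor_gen K"
| add: "p \<in> tensor_gen K \<Longrightarrow> q \<in> tensor_gen K \<Longrightarrow> (\<lambda>z. p z + q z) \<in> tensor_gen K"
| mult: "p \<in> tensor_gen K \<Longrightarrow> q \<in> tensor_gen K \<Longrightarrow> (\<lambda>z. p z * q z) \<in> tensor_gen K"

definition prod_set :: "('n \<Rightarrow> complex set) \<Rightarrow> (complex ^ 'n) set" where
  "prod_set K = {z. \<forall>i. z $ i \<in> K i}"

end

(*
  Each generator z \<mapsto> g(z_i), g \<in> R(K_i), is a uniform limit of rational functions of z_i,
  and both sides are closed subalgebras of C(K); this gives one inclusion. For the other it
  suffices that 1/q lies in the closed tensor algebra whenever the polynomial q has no zero on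
  K = K_1 \<times> \<dots> \<times> K_d. Then q has no zero on a product V_1 \<times> \<dots> \<times> V_d of open neighbourhoods.
  Freezing all variables but z_d, the function w \<mapsto> 1/q(z[d:=w]) is holomorphic on V_d; its
  Cauchy integral over a grid cycle in V_d - K_d, discretised by Riemann sums uniformly in the
  frozen variables, approximates 1/q(z) by sums of c/q(z[d:=\<zeta>]) \<cdot> 1/(\<zeta> - z_d) with \<zeta> \<notin> K_d.
  The functions 1/q(z[d:=\<zeta>]) depend on one variable fewer, so induction on the set of
  variables that q depends on concludes.
*)

theory Submission
  imports Defs "HOL-Complex_Analysis.Complex_Analysis"
begin

section \<open>Uniform closures in C(K)\<close>

lemma sup_closure_onI: "f \<in> S \<Longrightarrow> continuous_on K f \<Longrightarrow> f \<in> sup_closure_on K S"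
  unfolding sup_closure_on_def by force

lemma sup_closure_on_approxI:
  "continuous_on K f \<Longrightarrow> (\<And>e. e > 0 \<Longrightarrow> \<exists>g\<in>S. \<forall>z\<in>K. norm (f z - g z) < e)
    \<Longrightarrow> f \<in> sup_closure_on K S"
  unfolding sup_closure_on_def by blast

lemma sup_closure_onD:
  "f \<in> sup_closure_on K S \<Longrightarrow> e > 0 \<Longrightarrow> \<exists>g\<in>S. \<forall>z\<in>K. norm (f z - g z) < e"
  unfolding sup_closure_on_def by blast

lemma continuous_on_sup_closure_on: "f \<in> sup_closure_on K S \<Longrightarrow> continuous_on K f"
  unfolding sup_closure_on_def by blast

lemma sup_closure_on_mono: "S \<subseteq> T \<Longrightarrow> sup_closure_on K S \<subseteq> sup_closure_on K T"
  unfolding sup_closure_on_def by blast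

lemma sup_closure_on_idem: "sup_closure_on K (sup_closure_on K S) = sup_closure_on K S"
proof
  show "sup_closure_on K S \<subseteq> sup_closure_on K (sup_closure_on K S)"
    by (auto intro: sup_closure_onI continuous_on_sup_closure_on)
  show "sup_closure_on K (sup_closure_on K S) \<subseteq> sup_closure_on K S"
  proof
    fix f assume f: "f \<in> sup_closure_on K (sup_closure_on K S)"
    show "f \<in> sup_closure_on K S"
    proof (rule sup_closure_on_approxI)
      show "continuous_on K f" using f by (rule continuous_on_sup_closure_on)
      fix e :: real assume e: "e > 0"
      obtain g where g: "g \<in> sup_closure_on K S" "\<forall>z\<in>K. norm (f z - g z) < e/2"
        using sup_closure_onD[OF f, of "e/2"] e by auto
      obtain h where h: "h \<in> S" "\<forall>z\<in>K. norm (g z - h z) < e/2"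
        using sup_closure_onD[OF g(1), of "e/2"] e by auto
      have "norm (f z - h z) < e" if "z \<in> K" for z
        using norm_diff_triangle_less[of "f z" "g z" "e/2" "h z" "e/2"] g(2) h(2) that by simp
      then show "\<exists>g\<in>S. \<forall>z\<in>K. norm (f z - g z) < e" using h(1) by blast
    qed
  qed
qed

lemma sup_closure_on_add:
  assumes S: "\<And>a b. a \<in> S \<Longrightarrow> b \<in> S \<Longrightarrow> \<exists>c\<in>S. \<forall>z\<in>K. c z = a z + b z"
    and f: "f \<in> sup_closure_on K S" and g: "g \<in> sup_closure_on K S"
  shows "(\<lambda>z. f z + g z) \<in> sup_closure_on K S"
proof (rule sup_closure_on_approxI)
  show "continuous_on K (\<lambda>z. f z + g z)"
    using f g by (intro continuous_on_add continuous_on_sup_closure_on)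
  fix e :: real assume e: "e > 0"
  obtain a where a: "a \<in> S" "\<forall>z\<in>K. norm (f z - a z) < e/2"
    using sup_closure_onD[OF f, of "e/2"] e by auto
  obtain b where b: "b \<in> S" "\<forall>z\<in>K. norm (g z - b z) < e/2"
    using sup_closure_onD[OF g, of "e/2"] e by auto
  obtain c where c: "c \<in> S" "\<forall>z\<in>K. c z = a z + b z" using S a(1) b(1) by blast
  have "norm (f z + g z - c z) < e" if z: "z \<in> K" for z
  proof -
    have "norm (f z + g z - c z) \<le> norm (f z - a z) + norm (g z - b z)"
      using c(2) z norm_triangle_ineq[of "f z - a z" "g z - b z"] by (simp add: algebra_simps)
    then show ?thesis using a(2) b(2) z by fastforce
  qed
  then show "\<exists>c\<in>S. \<forall>z\<in>K. norm (f z + g z - c z) < e" using c(1) by blast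
qed

lemma norm_mult_diff_le:
  fixes x y a b :: "'a::real_normed_field"
  shows "norm (x * y - a * b) \<le> norm x * norm (y - b) + norm (x - a) * norm b"
proof -
  have "x * y - a * b = x * (y - b) + (x - a) * b" by (simp add: algebra_simps)
  then show ?thesis by (metis norm_mult norm_triangle_ineq)
qed

lemma sup_closure_on_mult:
  assumes K: "compact K"
    and S: "\<And>a b. a \<in> S \<Longrightarrow> b \<in> S \<Longrightarrow> \<exists>c\<in>S. \<forall>z\<in>K. c z = a z * b z"
    and f: "f \<in> sup_closure_on K S" and g: "g \<in> sup_closure_on K S"
  shows "(\<lambda>z. f z * g z) \<in> sup_closure_on K S"
proof (rule sup_closure_on_approxI)
  have fc: "continuous_on K f" and gc: "continuous_on K g"
    using f g by (auto intro: continuous_on_sup_closure_on)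
  then show "continuous_on K (\<lambda>z. f z * g z)" by (rule continuous_on_mult)
  obtain M where M: "M > 0" "\<forall>z\<in>K. norm (f z) \<le> M" "\<forall>z\<in>K. norm (g z) \<le> M"
  proof -
    have "bounded (f ` K \<union> g ` K)"
      using fc gc K by (intro bounded_Un[THEN iffD2] conjI compact_imp_bounded compact_continuous_image)
    then show ?thesis using that unfolding bounded_pos by blast
  qed
  fix e :: real assume e: "e > 0"
  define \<eta> where "\<eta> = min 1 (e / (2*M+2))"
  have \<eta>: "\<eta> > 0" "\<eta> \<le> 1" "\<eta> * (2*M+1) < e"
  proof -
    show "\<eta> > 0" "\<eta> \<le> 1" using e M(1) unfolding \<eta>_def by auto
    have "\<eta> * (2*M+1) \<le> e/(2*M+2) * (2*M+1)"
      unfolding \<eta>_def using M(1) by (intro mult_right_mono) auto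
    also have "\<dots> < e" using e M(1) by (simp add: field_simps)
    finally show "\<eta> * (2*M+1) < e" .
  qed
  obtain a where a: "a \<in> S" "\<forall>z\<in>K. norm (f z - a z) < \<eta>"
    using sup_closure_onD[OF f \<eta>(1)] by auto
  obtain b where b: "b \<in> S" "\<forall>z\<in>K. norm (g z - b z) < \<eta>"
    using sup_closure_onD[OF g \<eta>(1)] by auto
  obtain c where c: "c \<in> S" "\<forall>z\<in>K. c z = a z * b z" using S a(1) b(1) by blast
  have "norm (f z * g z - c z) < e" if z: "z \<in> K" for z
  proof -
    have nb: "norm (b z) \<le> M + 1"
      using norm_triangle_sub[of "b z" "g z"] norm_minus_commute[of "b z" "g z"] M(3) b(2) z \<eta>(2)
      by fastforce
    have "norm (f z * g z - c z) \<le> norm (f z) * norm (g z - b z) + norm (f z - a z) * norm (b z)"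
      using c(2) z norm_mult_diff_le by metis
    also have "\<dots> \<le> M * \<eta> + \<eta> * (M + 1)"
      using M z a(2) b(2) nb \<eta>(1) by (intro add_mono mult_mono) (auto intro: less_imp_le)
    also have "\<dots> = \<eta> * (2*M+1)" by (simp add: algebra_simps)
    finally show ?thesis using \<eta>(3) by linarith
  qed
  then show "\<exists>c\<in>S. \<forall>z\<in>K. norm (f z * g z - c z) < e" using c(1) by blast
qed

section \<open>Polynomial, rational and tensor functions\<close>

definition vec_upd :: "'a^'n \<Rightarrow> 'n \<Rightarrow> 'a \<Rightarrow> 'a^'n" where
  "vec_upd z d w = (\<chi> j. if j = d then w else z $ j)"

lemma vec_upd_nth [simp]: "vec_upd z d w $ j = (if j = d then w else z $ j)"
  unfolding vec_upd_def by simp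

lemma vec_upd_same [simp]: "vec_upd z d (z $ d) = z"
  by (simp add: vec_eq_iff)

lemma continuous_on_vec_nth: "continuous_on S (\<lambda>z::'a::real_normed_vector^'n. z $ i)"
  using bounded_linear_vec_nth linear_continuous_on by blast

lemma continuous_on_vec_upd:
  "continuous_on S (\<lambda>x::('a::real_normed_vector^'n) \<times> 'a. vec_upd (fst x) d (snd x))"
  unfolding vec_upd_def
proof (rule continuous_on_vec_lambda)
  fix j
  have "continuous_on S (\<lambda>x::('a^'n) \<times> 'a. fst x $ j)"
    by (rule continuous_on_compose2[OF continuous_on_vec_nth[of UNIV j]]) (auto intro: continuous_intros)
  then show "continuous_on S (\<lambda>x. if j = d then snd x else fst x $ j)"
    by (cases "j = d") (simp_all add: continuous_on_snd)
qed

lemma continuous_on_mpoly_fun: "p \<in> mpoly_fun \<Longrightarrow> continuous_on S p"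
  by (induction rule: mpoly_fun.induct) (auto intro!: continuous_intros continuous_on_vec_nth)

lemma mpoly_fun_vec_upd: "p \<in> mpoly_fun \<Longrightarrow> (\<lambda>z. p (vec_upd z d w)) \<in> mpoly_fun"
proof (induction rule: mpoly_fun.induct)
  case (coord i)
  then show ?case by (cases "i = d") (simp_all add: mpoly_fun.const mpoly_fun.coord)
qed (simp_all add: mpoly_fun.const mpoly_fun.add mpoly_fun.mult)

lemma holomorphic_on_mpoly_fun_vec_upd:
  "p \<in> mpoly_fun \<Longrightarrow> (\<lambda>w. p (vec_upd z d w)) holomorphic_on S"
proof (induction rule: mpoly_fun.induct)
  case (coord i)
  then show ?case by (cases "i = d") simp_all
qed (auto intro!: holomorphic_intros)

lemma mpoly_fun_poly_nth: "(\<lambda>z. poly p (z $ i)) \<in> mpoly_fun"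
proof (induction p)
  case 0
  then show ?case using mpoly_fun.const[of 0] by simp
next
  case (pCons a p)
  have "(\<lambda>z. a + z $ i * poly p (z $ i)) \<in> mpoly_fun"
    by (intro mpoly_fun.add mpoly_fun.mult mpoly_fun.const mpoly_fun.coord pCons.IH)
  then show ?case by simp
qed

lemma prod_set_nth: "z \<in> prod_set K \<Longrightarrow> z $ i \<in> K i"
  unfolding prod_set_def by auto

lemma compact_prod_set:
  assumes "\<And>i. compact (K i)"
  shows "compact (prod_set K)"
proof -
  have "closed (prod_set K)"
  proof -
    have "prod_set K = (\<Inter>i. (\<lambda>z. z $ i) -` K i)" unfolding prod_set_def by auto
    moreover have "closed ((\<lambda>z::complex^'a. z $ i) -` K i)" for i
      using assms compact_imp_closed
      by (intro continuous_closed_vimage) (auto intro: linear_continuous_at bounded_linear_vec_nth)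
    ultimately show ?thesis by auto
  qed
  moreover have "bounded (prod_set K)"
  proof -
    have "\<forall>i. \<exists>B. \<forall>x\<in>K i. norm x \<le> B"
      using assms compact_imp_bounded bounded_iff by metis
    then obtain B where B: "\<And>i x. x \<in> K i \<Longrightarrow> norm x \<le> B i" by metis
    have "norm z \<le> (\<Sum>i\<in>UNIV. B i)" if "z \<in> prod_set K" for z
    proof -
      have "norm z \<le> (\<Sum>i\<in>UNIV. norm (z $ i))"
        unfolding norm_vec_def by (rule L2_set_le_sum) auto
      also have "\<dots> \<le> (\<Sum>i\<in>UNIV. B i)"
        using that B by (intro sum_mono) (auto simp: prod_set_nth)
      finally show ?thesis .
    qed
    then show ?thesis unfolding bounded_iff by blast
  qed
  ultimately show ?thesis by (simp add: compact_eq_bounded_closed)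
qed

lemma R_one_const: "(\<lambda>w. c) \<in> R_one K"
  unfolding R_one_def rat_on1_def
  by (intro sup_closure_onI CollectI exI[where x="[:c:]"] exI[where x=1]) auto

lemma R_one_ident: "(\<lambda>w. w) \<in> R_one K"
  unfolding R_one_def rat_on1_def
  by (intro sup_closure_onI CollectI exI[where x="[:0,1:]"] exI[where x=1]) auto

lemma R_one_inverse:
  assumes "\<zeta> \<notin> K"
  shows "(\<lambda>w. 1 / (\<zeta> - w)) \<in> R_one K"
  unfolding R_one_def rat_on1_def
  using assms by (intro sup_closure_onI CollectI exI[where x=1] exI[where x="[:\<zeta>, -1:]"])
    (auto intro!: continuous_intros)

lemma tensor_gen_const: "(\<lambda>z. c) \<in> tensor_gen K"
  using tensor_gen.gen[OF R_one_const] .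

lemma tensor_gen_inverse: "\<zeta> \<notin> K d \<Longrightarrow> (\<lambda>z. 1 / (\<zeta> - z $ d)) \<in> tensor_gen K"
  by (rule tensor_gen.gen[where g="\<lambda>w. 1 / (\<zeta> - w)"], rule R_one_inverse)

lemma mpoly_fun_subset_tensor_gen: "mpoly_fun \<subseteq> tensor_gen K"
proof
  show "p \<in> tensor_gen K" if "p \<in> mpoly_fun" for p
    using that
  proof (induction rule: mpoly_fun.induct)
    case (coord i)
    show ?case by (rule tensor_gen.gen[OF R_one_ident])
  qed (auto intro: tensor_gen_const tensor_gen.add tensor_gen.mult)
qed

lemma continuous_on_comp_nth:
  "continuous_on (K i) g \<Longrightarrow> continuous_on (prod_set K) (\<lambda>z. g (z $ i))"
  by (rule continuous_on_compose2[of "K i" g _ "\<lambda>z. z $ i"])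
    (auto intro: continuous_on_vec_nth prod_set_nth)

lemma continuous_on_tensor_gen: "p \<in> tensor_gen K \<Longrightarrow> continuous_on (prod_set K) p"
proof (induction rule: tensor_gen.induct)
  case (gen g i)
  then show ?case
    unfolding R_one_def by (intro continuous_on_comp_nth continuous_on_sup_closure_on)
qed (auto intro!: continuous_intros)

abbreviation tensor_closure :: "('n \<Rightarrow> complex set) \<Rightarrow> (complex ^ 'n \<Rightarrow> complex) set" where
  "tensor_closure K \<equiv> sup_closure_on (prod_set K) (tensor_gen K)"

lemma tensor_gen_subset_tensor_closure: "tensor_gen K \<subseteq> tensor_closure K"
  by (auto intro: sup_closure_onI continuous_on_tensor_gen)

lemma tensor_closure_add:
  "f \<in> tensor_closure K \<Longrightarrow> g \<in> tensor_closure K \<Longrightarrow> (\<lambda>z. f z + g z) \<in> tensor_closure K"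
  by (rule sup_closure_on_add) (auto intro: tensor_gen.add)

lemma tensor_closure_mult:
  assumes "\<And>i. compact (K i)"
  shows "f \<in> tensor_closure K \<Longrightarrow> g \<in> tensor_closure K \<Longrightarrow> (\<lambda>z. f z * g z) \<in> tensor_closure K"
  by (rule sup_closure_on_mult) (auto intro: tensor_gen.mult compact_prod_set assms)

lemma tensor_closure_sum:
  "finite T \<Longrightarrow> (\<And>t. t \<in> T \<Longrightarrow> f t \<in> tensor_closure K) \<Longrightarrow> (\<lambda>z. \<Sum>t\<in>T. f t z) \<in> tensor_closure K"
proof (induction T rule: finite_induct)
  case empty
  then show ?case using tensor_gen_subset_tensor_closure tensor_gen_const[of 0] by auto
qed (simp add: tensor_closure_add)

lemma rat_on_add:
  assumes "a \<in> rat_on S" "b \<in> rat_on S"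
  shows "\<exists>c\<in>rat_on S. \<forall>z\<in>S. c z = a z + b z"
proof -
  obtain p1 q1 p2 q2 where h: "p1 \<in> mpoly_fun" "q1 \<in> mpoly_fun" "\<forall>z\<in>S. q1 z \<noteq> 0" "a = (\<lambda>z. p1 z / q1 z)"
    "p2 \<in> mpoly_fun" "q2 \<in> mpoly_fun" "\<forall>z\<in>S. q2 z \<noteq> 0" "b = (\<lambda>z. p2 z / q2 z)"
    using assms unfolding rat_on_def by blast
  let ?c = "\<lambda>z. (p1 z * q2 z + p2 z * q1 z) / (q1 z * q2 z)"
  have "?c \<in> rat_on S"
    unfolding rat_on_def using h
    by (intro CollectI exI[of _ "\<lambda>z. p1 z * q2 z + p2 z * q1 z"] exI[of _ "\<lambda>z. q1 z * q2 z"])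
      (auto intro: mpoly_fun.add mpoly_fun.mult)
  moreover have "\<forall>z\<in>S. ?c z = a z + b z"
    using h by (simp add: field_simps)
  ultimately show ?thesis by (intro bexI[of _ ?c])
qed

lemma rat_on_mult:
  assumes "a \<in> rat_on S" "b \<in> rat_on S"
  shows "\<exists>c\<in>rat_on S. \<forall>z\<in>S. c z = a z * b z"
proof -
  obtain p1 q1 p2 q2 where h: "p1 \<in> mpoly_fun" "q1 \<in> mpoly_fun" "\<forall>z\<in>S. q1 z \<noteq> 0" "a = (\<lambda>z. p1 z / q1 z)"
    "p2 \<in> mpoly_fun" "q2 \<in> mpoly_fun" "\<forall>z\<in>S. q2 z \<noteq> 0" "b = (\<lambda>z. p2 z / q2 z)"
    using assms unfolding rat_on_def by blast
  let ?c = "\<lambda>z. (p1 z * p2 z) / (q1 z * q2 z)"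
  have "?c \<in> rat_on S"
    unfolding rat_on_def using h
    by (intro CollectI exI[of _ "\<lambda>z. p1 z * p2 z"] exI[of _ "\<lambda>z. q1 z * q2 z"])
      (auto intro: mpoly_fun.mult)
  moreover have "\<forall>z\<in>S. ?c z = a z * b z"
    using h by simp
  ultimately show ?thesis by (intro bexI[of _ ?c])
qed

lemma R_multi_comp_nth:
  assumes g: "g \<in> R_one (K i)"
  shows "(\<lambda>z. g (z $ i)) \<in> R_multi (prod_set K)"
  unfolding R_multi_def
proof (rule sup_closure_on_approxI)
  show "continuous_on (prod_set K) (\<lambda>z. g (z $ i))"
    using g unfolding R_one_def by (intro continuous_on_comp_nth continuous_on_sup_closure_on)
  fix e :: real assume e: "e > 0"
  obtain p q where pq: "\<forall>w\<in>K i. poly q w \<noteq> 0" "\<forall>w\<in>K i. norm (g w - poly p w / poly q w) < e"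
    using sup_closure_onD[OF g[unfolded R_one_def] e] unfolding rat_on1_def by blast
  let ?r = "\<lambda>z. poly p (z $ i) / poly q (z $ i)"
  have "?r \<in> rat_on (prod_set K)"
    unfolding rat_on_def using pq(1) prod_set_nth
    by (intro CollectI exI[of _ "\<lambda>z. poly p (z $ i)"] exI[of _ "\<lambda>z. poly q (z $ i)"])
      (auto intro: mpoly_fun_poly_nth)
  moreover have "\<forall>z\<in>prod_set K. norm (g (z $ i) - ?r z) < e"
    using pq(2) prod_set_nth by auto
  ultimately show "\<exists>h\<in>rat_on (prod_set K). \<forall>z\<in>prod_set K. norm (g (z $ i) - h z) < e"
    by (intro bexI[of _ ?r])
qed

lemma tensor_closure_subset_R_multi:
  assumes "\<And>i. compact (K i)"
  shows "tensor_closure K \<subseteq> R_multi (prod_set K)"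
proof -
  have "tensor_gen K \<subseteq> R_multi (prod_set K)"
  proof
    show "p \<in> R_multi (prod_set K)" if "p \<in> tensor_gen K" for p
      using that
    proof (induction rule: tensor_gen.induct)
      case (gen g i)
      then show ?case by (rule R_multi_comp_nth)
    next
      case (add p q)
      then show ?case unfolding R_multi_def by (intro sup_closure_on_add rat_on_add)
    next
      case (mult p q)
      then show ?case unfolding R_multi_def
        by (intro sup_closure_on_mult rat_on_mult compact_prod_set assms)
    qed
  qed
  then show ?thesis
    unfolding R_multi_def by (metis sup_closure_on_idem sup_closure_on_mono)
qed

section \<open>Riemann sums\<close>

lemma integral_split_unit_interval:
  fixes g :: "real \<Rightarrow> 'a::banach"
  assumes g: "continuous_on {0..1} g" and N: "N > 0"
  shows "integral {0..1} g = (\<Sum>k<N. integral {real k / N..real (Suc k) / N} g)"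
proof -
  have "integral {0..real m / N} g = (\<Sum>k<m. integral {real k / N..real (Suc k) / N} g)"
    if "m \<le> N" for m
    using that
  proof (induction m)
    case (Suc m)
    have le: "0 \<le> real m / N" "real m / N \<le> real (Suc m) / N" "real (Suc m) / N \<le> 1"
      using Suc.prems N by (auto simp: divide_right_mono field_simps)
    have "g integrable_on {0..real (Suc m) / N}"
      using le by (intro integrable_continuous_interval continuous_on_subset[OF g]) auto
    then have "integral {0..real m / N} g + integral {real m / N..real (Suc m) / N} g
        = integral {0..real (Suc m) / N} g"
      using le by (intro Henstock_Kurzweil_Integration.integral_combine) auto
    then show ?case using Suc by simp
  qed simp
  from this[of N] N show ?thesis by simp
qed

lemma integral_left_endpoint_error:
  fixes f :: "real \<Rightarrow> complex"
  assumes ab: "a \<le> b" and f: "continuous_on {a..b} f"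
    and osc: "\<And>t. t \<in> {a..b} \<Longrightarrow> norm (f t - f a) \<le> \<eta>"
  shows "norm (integral {a..b} f - of_real (b - a) * f a) \<le> \<eta> * (b - a)"
proof -
  have "integral {a..b} (\<lambda>t. f t - f a) = integral {a..b} f - integral {a..b} (\<lambda>t. f a)"
    using f by (intro integral_diff integrable_continuous_interval continuous_intros)
  also have "integral {a..b} (\<lambda>t. f a) = of_real (b - a) * f a"
    using ab by (simp add: scaleR_conv_of_real)
  finally have "integral {a..b} f - of_real (b - a) * f a = integral {a..b} (\<lambda>t. f t - f a)"
    by simp
  also have "norm \<dots> \<le> \<eta> * (b - a)"
    using ab f osc by (intro integral_bound continuous_intros) auto
  finally show ?thesis .
qed

lemma eventually_uniform_Riemann_sum:
  fixes f :: "'q::metric_space \<Rightarrow> real \<Rightarrow> complex"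
  assumes Q: "compact Q" and f: "continuous_on (Q \<times> {0..1}) (\<lambda>x. f (fst x) (snd x))"
    and \<eta>: "\<eta> > 0"
  shows "\<forall>\<^sub>F N in sequentially. \<forall>q\<in>Q.
           norm (integral {0..1} (f q) - (\<Sum>k<N. f q (real k / real N)) / of_nat N) \<le> \<eta>"
proof -
  have "uniformly_continuous_on (Q \<times> {0..1}) (\<lambda>x. f (fst x) (snd x))"
    using f Q by (intro compact_uniformly_continuous compact_Times) auto
  then obtain \<delta> where \<delta>: "\<delta> > 0" and
    ud: "\<And>x x'. x \<in> Q \<times> {0..1} \<Longrightarrow> x' \<in> Q \<times> {0..1} \<Longrightarrow> dist x' x < \<delta> \<Longrightarrow>
       dist (f (fst x') (snd x')) (f (fst x) (snd x)) < \<eta>"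
    unfolding uniformly_continuous_on_def using \<eta> by metis
  obtain N0 :: nat where N0: "N0 > 1 / \<delta>" using reals_Archimedean2 by blast
  show ?thesis unfolding eventually_sequentially
  proof (intro exI[of _ "Suc N0"] allI impI ballI)
    fix N q assume N: "Suc N0 \<le> N" and q: "q \<in> Q"
    have Npos: "N > 0" using N by simp
    have "1 / \<delta> < real N" using N0 N by linarith
    then have Nd: "1 / real N < \<delta>" using \<delta> Npos by (simp add: field_simps)
    have cq: "continuous_on {0..1} (f q)"
      using q by (intro continuous_on_compose2[OF f, of "{0..1}" "\<lambda>t. (q, t)", simplified])
        (auto intro!: continuous_intros)
    have piece: "norm (integral {real k / N..real (Suc k) / N} (f q) - f q (real k / N) / of_nat N) \<le> \<eta> / N"
      if k: "k < N" for k
    proof -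
      let ?a = "real k / N" and ?b = "real (Suc k) / N"
      have ab: "?a \<le> ?b" "0 \<le> ?a" "?b \<le> 1" "?b - ?a = 1 / N"
        using k Npos by (auto simp: divide_right_mono field_simps)
      have "norm (f q t - f q ?a) \<le> \<eta>" if t: "t \<in> {?a..?b}" for t
      proof -
        have "dist (q, t) (q, ?a) < \<delta>"
          using t ab Nd by (simp add: dist_Pair_Pair dist_real_def)
        moreover have "0 \<le> t" "t \<le> 1"
          using t ab(2,3) unfolding atLeastAtMost_iff by linarith+
        ultimately show ?thesis
          using ud[of "(q, ?a)" "(q, t)"] q ab by (auto simp: dist_norm)
      qed
      then have "norm (integral {?a..?b} (f q) - of_real (?b - ?a) * f q ?a) \<le> \<eta> * (?b - ?a)"
        using ab by (intro integral_left_endpoint_error continuous_on_subset[OF cq]) auto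
      then show ?thesis unfolding ab(4) by (simp add: divide_inverse mult.commute)
    qed
    have "integral {0..1} (f q) - (\<Sum>k<N. f q (real k / real N)) / of_nat N
        = (\<Sum>k<N. integral {real k / N..real (Suc k) / N} (f q) - f q (real k / N) / of_nat N)"
      by (simp add: integral_split_unit_interval[OF cq Npos] sum_subtractf sum_divide_distrib)
    also have "norm \<dots> \<le> (\<Sum>k<N. \<eta> / N)"
      by (rule order_trans[OF norm_sum], rule sum_mono, rule piece) auto
    also have "\<dots> = \<eta>" using Npos by simp
    finally show "norm (integral {0..1} (f q) - (\<Sum>k<N. f q (real k / real N)) / of_nat N) \<le> \<eta>" .
  qed
qed

section \<open>Grid cycles and the Cauchy formula\<close>

definition grid_corner :: "real \<Rightarrow> int \<times> int \<Rightarrow> complex" where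
  "grid_corner h s = Complex (of_int (fst s) * h) (of_int (snd s) * h)"

definition grid_square :: "real \<Rightarrow> int \<times> int \<Rightarrow> complex set" where
  "grid_square h s = cbox (grid_corner h s) (grid_corner h (fst s + 1, snd s + 1))"

definition grid_box :: "real \<Rightarrow> int \<times> int \<Rightarrow> complex set" where
  "grid_box h s = box (grid_corner h s) (grid_corner h (fst s + 1, snd s + 1))"

definition square_edges :: "int \<times> int \<Rightarrow> ((int \<times> int) \<times> (int \<times> int)) set" where
  "square_edges s = {((fst s, snd s), (fst s + 1, snd s)), ((fst s + 1, snd s), (fst s + 1, snd s + 1)),
               ((fst s + 1, snd s + 1), (fst s, snd s + 1)), ((fst s, snd s + 1), (fst s, snd s))}"

definition grid_segment :: "real \<Rightarrow> (int \<times> int) \<times> (int \<times> int) \<Rightarrow> complex set" where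
  "grid_segment h e = closed_segment (grid_corner h (fst e)) (grid_corner h (snd e))"

definition boundary_edges :: "(int \<times> int) set \<Rightarrow> ((int \<times> int) \<times> (int \<times> int)) set" where
  "boundary_edges F = {e \<in> (\<Union>s\<in>F. square_edges s). prod.swap e \<notin> (\<Union>s\<in>F. square_edges s)}"

lemma grid_corner_Re [simp]: "Re (grid_corner h s) = of_int (fst s) * h"
  and grid_corner_Im [simp]: "Im (grid_corner h s) = of_int (snd s) * h"
  unfolding grid_corner_def by simp_all

lemma grid_corner_inj: "h > 0 \<Longrightarrow> grid_corner h a = grid_corner h b \<Longrightarrow> a = b"
  unfolding grid_corner_def by (cases a; cases b) (auto simp: complex_eq_iff)

lemma in_grid_square:
  "z \<in> grid_square h (i, j) \<longleftrightarrow>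
     of_int i * h \<le> Re z \<and> Re z \<le> (of_int i + 1) * h \<and> of_int j * h \<le> Im z \<and> Im z \<le> (of_int j + 1) * h"
  unfolding grid_square_def in_cbox_complex_iff by (auto simp: algebra_simps)

lemma in_grid_box:
  "z \<in> grid_box h (i, j) \<longleftrightarrow>
     of_int i * h < Re z \<and> Re z < (of_int i + 1) * h \<and> of_int j * h < Im z \<and> Im z < (of_int j + 1) * h"
  unfolding grid_box_def in_box_complex_iff by (auto simp: algebra_simps)

lemma square_edges_unique: "e \<in> square_edges s \<Longrightarrow> e \<in> square_edges s' \<Longrightarrow> s = s'"
  unfolding square_edges_def by (cases s; cases s'; auto)

lemma finite_square_edges [simp]: "finite (square_edges s)"
  unfolding square_edges_def by simp

lemma swap_square_edge: "e \<in> square_edges s \<Longrightarrow> \<exists>s'. prod.swap e \<in> square_edges s'"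
proof -
  assume "e \<in> square_edges s"
  moreover obtain i j where s: "s = (i, j)" by (cases s)
  ultimately have "e = ((i,j),(i+1,j)) \<or> e = ((i+1,j),(i+1,j+1)) \<or> e = ((i+1,j+1),(i,j+1)) \<or> e = ((i,j+1),(i,j))"
    unfolding square_edges_def by simp
  moreover have "prod.swap ((i,j),(i+1,j)) \<in> square_edges (i, j - 1)"
    "prod.swap ((i+1,j),(i+1,j+1)) \<in> square_edges (i + 1, j)"
    "prod.swap ((i+1,j+1),(i,j+1)) \<in> square_edges (i, j + 1)"
    "prod.swap ((i,j+1),(i,j)) \<in> square_edges (i - 1, j)"
    by (simp_all add: square_edges_def)
  ultimately show ?thesis by blast
qed

lemma grid_segment_swap: "grid_segment h (prod.swap e) = grid_segment h e"
  unfolding grid_segment_def by (simp add: closed_segment_commute)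

lemma grid_segment_subset_square:
  assumes h: "h > 0" and e: "e \<in> square_edges s"
  shows "grid_segment h e \<subseteq> grid_square h s"
proof -
  have corner: "grid_corner h (a, b) \<in> grid_square h s"
    if "a \<in> {fst s, fst s + 1}" "b \<in> {snd s, snd s + 1}" for a b
    using that h by (cases s) (auto simp: in_grid_square mult_right_mono)
  have "grid_corner h (fst e) \<in> grid_square h s" "grid_corner h (snd e) \<in> grid_square h s"
    using e by (cases e; auto simp: square_edges_def intro!: corner)+
  then show ?thesis
    unfolding grid_segment_def grid_square_def by (intro closed_segment_subset convex_box)
qed

lemma grid_box_unique:
  assumes h: "h > 0" and "y \<in> grid_box h s0" and "y \<in> grid_square h s"
  shows "s = s0"
proof -
  obtain i j where s: "s = (i, j)" by (cases s)
  obtain i0 j0 where s0: "s0 = (i0, j0)" by (cases s0)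
  have "of_int i * h < (of_int i0 + 1) * h" "of_int i0 * h < (of_int i + 1) * h"
       "of_int j * h < (of_int j0 + 1) * h" "of_int j0 * h < (of_int j + 1) * h"
    using assms(2,3) unfolding s s0 in_grid_square in_grid_box by linarith+
  then have "real_of_int i < of_int i0 + 1" "real_of_int i0 < of_int i + 1"
       "real_of_int j < of_int j0 + 1" "real_of_int j0 < of_int j + 1"
    using h by (simp_all add: mult_less_cancel_right)
  then show ?thesis using s s0 by simp
qed

lemma grid_corner_le:
  "h > 0 \<Longrightarrow> Re (grid_corner h s) \<le> Re (grid_corner h (fst s + 1, snd s + 1))"
  "h > 0 \<Longrightarrow> Im (grid_corner h s) \<le> Im (grid_corner h (fst s + 1, snd s + 1))"
  by (auto simp: algebra_simps)

lemma path_image_grid_rectpath: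
  "path_image (rectpath (grid_corner h s) (grid_corner h (fst s + 1, snd s + 1)))
     = (\<Union>e\<in>square_edges s. grid_segment h e)"
  unfolding rectpath_def Let_def square_edges_def grid_segment_def
  by (simp add: path_image_join grid_corner_def Un_ac)

lemma grid_segment_disjoint_box:
  assumes "h > 0" "e \<in> square_edges s"
  shows "grid_segment h e \<inter> grid_box h s = {}"
  using assms path_image_grid_rectpath[of h s] path_image_rectpath_cbox_minus_box[OF grid_corner_le]
  unfolding grid_square_def grid_box_def by blast

lemma contour_integral_grid_rectpath:
  assumes f: "\<And>e. e \<in> square_edges s \<Longrightarrow> continuous_on (grid_segment h e) f" and h: "h > 0"
  shows "contour_integral (rectpath (grid_corner h s) (grid_corner h (fst s + 1, snd s + 1))) f
       = (\<Sum>e\<in>square_edges s. contour_integral (linepath (grid_corner h (fst e)) (grid_corner h (snd e))) f)"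
proof -
  obtain i j where s: "s = (i, j)" by (cases s)
  let ?c = "\<lambda>a b. grid_corner h (a, b)"
  have c: "continuous_on (closed_segment (?c i j) (?c (i+1) j)) f"
          "continuous_on (closed_segment (?c (i+1) j) (?c (i+1) (j+1))) f"
          "continuous_on (closed_segment (?c (i+1) (j+1)) (?c i (j+1))) f"
          "continuous_on (closed_segment (?c i (j+1)) (?c i j)) f"
    using f unfolding s square_edges_def grid_segment_def by auto
  have r: "rectpath (grid_corner h s) (grid_corner h (fst s + 1, snd s + 1)) =
     linepath (?c i j) (?c (i+1) j) +++ linepath (?c (i+1) j) (?c (i+1) (j+1)) +++
     linepath (?c (i+1) (j+1)) (?c i (j+1)) +++ linepath (?c i (j+1)) (?c i j)"
    unfolding rectpath_def Let_def s by (simp add: grid_corner_def)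
  have "?c i j \<noteq> ?c (i+1) j" "?c i j \<noteq> ?c (i+1) (j+1)" "?c i j \<noteq> ?c i (j+1)"
    "?c (i+1) j \<noteq> ?c (i+1) (j+1)" "?c (i+1) j \<noteq> ?c i (j+1)" "?c (i+1) (j+1) \<noteq> ?c i (j+1)"
    using h by (auto simp: grid_corner_def complex_eq_iff)
  then show ?thesis unfolding r
    using c contour_integrable_continuous_linepath[OF c(1)] contour_integrable_continuous_linepath[OF c(2)]
      contour_integrable_continuous_linepath[OF c(3)] contour_integrable_continuous_linepath[OF c(4)]
    by (simp add: s square_edges_def contour_integrable_joinI)
qed

lemma Cauchy_integral_grid_square:
  assumes h: "h > 0" and y: "y \<in> grid_box h s0"
    and sV: "grid_square h s \<subseteq> V" and \<phi>: "\<phi> holomorphic_on V"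
  shows "contour_integral (rectpath (grid_corner h s) (grid_corner h (fst s + 1, snd s + 1))) (\<lambda>\<zeta>. \<phi> \<zeta> / (\<zeta> - y))
       = (if s = s0 then 2 * pi * \<i> * \<phi> y else 0)"
proof -
  let ?R = "rectpath (grid_corner h s) (grid_corner h (fst s + 1, snd s + 1))"
  have pim: "path_image ?R = grid_square h s - grid_box h s"
    unfolding grid_square_def grid_box_def by (rule path_image_rectpath_cbox_minus_box[OF grid_corner_le[OF h]])
  have hol: "\<phi> holomorphic_on grid_square h s" using \<phi> sV by (rule holomorphic_on_subset)
  have cvx: "convex (grid_square h s)" unfolding grid_square_def by (rule convex_box)
  show ?thesis
  proof (cases "s = s0")
    case True
    have yb: "y \<in> box (grid_corner h s) (grid_corner h (fst s + 1, snd s + 1))"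
      using y True by (simp add: grid_box_def)
    have "((\<lambda>\<zeta>. \<phi> \<zeta> / (\<zeta> - y)) has_contour_integral (2*pi * \<i> * winding_number ?R y * \<phi> y)) ?R"
      using pim y True yb
      by (intro Cauchy_integral_formula_convex_simple[OF cvx hol]) (auto simp: grid_square_def)
    moreover have "winding_number ?R y = 1" by (rule winding_number_rectpath[OF yb])
    ultimately show ?thesis using True by (simp add: contour_integral_unique)
  next
    case False
    have "y \<notin> grid_square h s" using grid_box_unique[OF h y] False by blast
    then have "((\<lambda>\<zeta>. \<phi> \<zeta> / (\<zeta> - y)) has_contour_integral 0) ?R"
      using pim by (intro Cauchy_theorem_convex_simple[OF _ cvx]) (auto intro!: holomorphic_intros hol)
    then show ?thesis using False by (simp add: contour_integral_unique)
  qed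
qed

lemma sum_involution_neg_eq_0:
  fixes I :: "'a \<Rightarrow> 'b::real_vector"
  assumes "finite A" "\<And>x. x \<in> A \<Longrightarrow> r x \<in> A" "\<And>x. x \<in> A \<Longrightarrow> r (r x) = x"
    "\<And>x. x \<in> A \<Longrightarrow> I (r x) = - I x"
  shows "(\<Sum>x\<in>A. I x) = 0"
proof -
  have "bij_betw r A A"
    by (rule bij_betwI[where g=r]) (use assms in auto)
  then have "(\<Sum>x\<in>A. I x) = (\<Sum>x\<in>A. I (r x))" by (rule sum.reindex_bij_betw[symmetric])
  also have "\<dots> = - (\<Sum>x\<in>A. I x)" using assms(4) by (simp add: sum_negf)
  finally have "2 *\<^sub>R (\<Sum>x\<in>A. I x) = 0" by (simp add: scaleR_2 eq_neg_iff_add_eq_0)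
  then show ?thesis by simp
qed

lemma Cauchy_integral_boundary_edges:
  assumes h: "h > 0" and F: "finite F" and s0: "s0 \<in> F" and y: "y \<in> grid_box h s0"
    and FV: "\<And>s. s \<in> F \<Longrightarrow> grid_square h s \<subseteq> V" and \<phi>: "\<phi> holomorphic_on V"
  shows "(\<Sum>e\<in>boundary_edges F.
            contour_integral (linepath (grid_corner h (fst e)) (grid_corner h (snd e))) (\<lambda>\<zeta>. \<phi> \<zeta> / (\<zeta> - y)))
         = 2 * pi * \<i> * \<phi> y"
proof -
  define I where "I = (\<lambda>e. contour_integral (linepath (grid_corner h (fst e)) (grid_corner h (snd e)))
                          (\<lambda>\<zeta>. \<phi> \<zeta> / (\<zeta> - y)))"
  define D where "D = (\<Union>s\<in>F. square_edges s)"
  define Din where "Din = {e \<in> D. prod.swap e \<in> D}"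
  have finD: "finite D" unfolding D_def using F by simp
  have cont: "continuous_on (grid_segment h e) (\<lambda>\<zeta>. \<phi> \<zeta> / (\<zeta> - y))" if "e \<in> square_edges s" "s \<in> F" for e s
  proof -
    have "y \<notin> grid_segment h e"
    proof (cases "s = s0")
      case True
      then show ?thesis using grid_segment_disjoint_box[OF h that(1)] y by blast
    next
      case False
      then show ?thesis using grid_box_unique[OF h y] grid_segment_subset_square[OF h that(1)] by blast
    qed
    moreover have "continuous_on (grid_segment h e) \<phi>"
      using holomorphic_on_imp_continuous_on[OF \<phi>] grid_segment_subset_square[OF h that(1)] FV[OF that(2)]
      by (blast intro: continuous_on_subset)
    ultimately show ?thesis by (intro continuous_intros) auto
  qed
  have "2 * pi * \<i> * \<phi> y = (\<Sum>s\<in>F. if s = s0 then 2 * pi * \<i> * \<phi> y else 0)"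
    using F s0 by simp
  also have "\<dots> = (\<Sum>s\<in>F. contour_integral (rectpath (grid_corner h s) (grid_corner h (fst s + 1, snd s + 1)))
                          (\<lambda>\<zeta>. \<phi> \<zeta> / (\<zeta> - y)))"
    using Cauchy_integral_grid_square[OF h y FV \<phi>] by simp
  also have "\<dots> = (\<Sum>s\<in>F. \<Sum>e\<in>square_edges s. I e)"
    unfolding I_def using cont h by (intro sum.cong refl contour_integral_grid_rectpath) auto
  also have "\<dots> = (\<Sum>e\<in>D. I e)"
    unfolding D_def by (rule sum.UNION_disjoint[symmetric]) (use F square_edges_unique in auto)
  also have "\<dots> = (\<Sum>e\<in>boundary_edges F. I e) + (\<Sum>e\<in>Din. I e)"
  proof -
    have "D = boundary_edges F \<union> Din" "boundary_edges F \<inter> Din = {}"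
      unfolding boundary_edges_def Din_def D_def by auto
    then show ?thesis using finD by (simp add: sum.union_disjoint)
  qed
  also have "(\<Sum>e\<in>Din. I e) = 0"
  \<comment> \<open>interior edges are traversed once in each direction\<close>
  proof (rule sum_involution_neg_eq_0[where r=prod.swap])
    show "finite Din" using finD unfolding Din_def by simp
    show "I (prod.swap e) = - I e" if e: "e \<in> Din" for e
    proof -
      obtain s where s: "s \<in> F" "e \<in> square_edges s" using e unfolding Din_def D_def by blast
      show ?thesis unfolding I_def
        using contour_integral_reverse_linepath[OF cont[OF s(2,1), unfolded grid_segment_def]] by simp
    qed
  qed (auto simp: Din_def)
  finally show ?thesis unfolding I_def by simp
qed

lemma boundary_edge_outer_square:
  assumes h: "h > 0" and e: "e \<in> boundary_edges F"
  obtains s' where "s' \<notin> F" "grid_segment h e \<subseteq> grid_square h s'"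
proof -
  obtain s where "e \<in> square_edges s" using e unfolding boundary_edges_def by blast
  then obtain s' where s': "prod.swap e \<in> square_edges s'" using swap_square_edge by blast
  then have "s' \<notin> F" using e unfolding boundary_edges_def by blast
  moreover have "grid_segment h e \<subseteq> grid_square h s'"
    using grid_segment_subset_square[OF h s'] by (simp add: grid_segment_swap)
  ultimately show ?thesis by (rule that)
qed

lemma closure_grid_box: "h > 0 \<Longrightarrow> closure (grid_box h s) = grid_square h s"
  unfolding grid_box_def grid_square_def
  by (intro closure_box) (auto simp: box_ne_empty Basis_complex_def)

lemma in_grid_square_floor: "h > 0 \<Longrightarrow> w \<in> grid_square h (\<lfloor>Re w / h\<rfloor>, \<lfloor>Im w / h\<rfloor>)"
  unfolding in_grid_square
  by (auto simp: pos_le_divide_eq[symmetric] pos_divide_le_eq[symmetric] less_imp_le[OF real_of_int_floor_add_one_gt])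

lemma finite_grid_squares_meeting:
  assumes K: "bounded K" and h: "h > 0"
  shows "finite {s. grid_square h s \<inter> K \<noteq> {}}"
proof -
  obtain B where B: "\<And>x. x \<in> K \<Longrightarrow> cmod x \<le> B"
    using K unfolding bounded_iff by blast
  define M where "M = \<lceil>B / h\<rceil> + 1"
  have "{s. grid_square h s \<inter> K \<noteq> {}} \<subseteq> {-M..M} \<times> {-M..M}"
  proof safe
    fix i j x assume x: "x \<in> grid_square h (i, j)" "x \<in> K"
    have "\<bar>Re x\<bar> \<le> B" "\<bar>Im x\<bar> \<le> B" using B[OF x(2)] abs_Re_le_cmod abs_Im_le_cmod by (meson order_trans)+
    then have "of_int i * h \<le> B" "- B \<le> (of_int i + 1) * h" "of_int j * h \<le> B" "- B \<le> (of_int j + 1) * h"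
      using x(1) unfolding in_grid_square by linarith+
    then have "of_int i \<le> B / h" "- B / h - 1 \<le> of_int i" "of_int j \<le> B / h" "- B / h - 1 \<le> of_int j"
      using h by (simp_all add: field_simps)
    moreover have "B / h \<le> of_int \<lceil>B / h\<rceil>" by simp
    ultimately have "real_of_int i \<le> of_int M" "- of_int M \<le> real_of_int i"
       "real_of_int j \<le> of_int M" "- of_int M \<le> real_of_int j"
      unfolding M_def by (simp_all, linarith+)
    then show "i \<in> {-M..M}" "j \<in> {-M..M}" by simp_all
  qed
  then show ?thesis by (rule finite_subset) simp
qed

text \<open>The cycle is the boundary of the union of the grid squares meeting K, for a mesh so fine
  that these squares lie in V. The Cauchy formula is only obtained off the grid lines, a set whose
  closure contains K.\<close>

lemma Cauchy_formula_segments: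
  assumes K: "compact K" and V: "open V" and KV: "K \<subseteq> V"
  obtains E :: "(complex \<times> complex) set" where "finite E"
    "\<And>a b. (a, b) \<in> E \<Longrightarrow> closed_segment a b \<subseteq> V"
    "\<And>a b. (a, b) \<in> E \<Longrightarrow> closed_segment a b \<inter> K = {}"
    "K \<subseteq> closure {y. (\<forall>(a, b)\<in>E. y \<notin> closed_segment a b) \<and>
        (\<forall>\<phi>. \<phi> holomorphic_on V \<longrightarrow>
          (\<Sum>(a, b)\<in>E. contour_integral (linepath a b) (\<lambda>\<zeta>. \<phi> \<zeta> / (\<zeta> - y))) = 2 * pi * \<i> * \<phi> y)}"
proof -
  obtain \<delta> where \<delta>: "\<delta> > 0" "(\<Union>x\<in>K. cball x \<delta>) \<subseteq> V"
    using compact_subset_open_imp_cball_epsilon_subset[OF K V KV] by blast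
  define h where "h = \<delta> / 2"
  have h: "h > 0" using \<delta> by (simp add: h_def)
  define F where "F = {s. grid_square h s \<inter> K \<noteq> {}}"
  have finF: "finite F"
    unfolding F_def using finite_grid_squares_meeting[OF compact_imp_bounded[OF K] h] .
  have FV: "grid_square h s \<subseteq> V" if s: "s \<in> F" for s
  proof
    fix z assume z: "z \<in> grid_square h s"
    obtain x where x: "x \<in> K" "x \<in> grid_square h s" using s unfolding F_def by blast
    obtain i j where ij: "s = (i, j)" by (cases s)
    have "\<bar>Re (x - z)\<bar> \<le> h" "\<bar>Im (x - z)\<bar> \<le> h"
      using x(2) z unfolding ij in_grid_square by (auto simp: abs_le_iff algebra_simps)
    then have "z \<in> cball x \<delta>" using cmod_le[of "x - z"] unfolding mem_cball dist_norm h_def by linarith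
    then show "z \<in> V" using \<delta>(2) x(1) by blast
  qed
  define seg where "seg = (\<lambda>e. (grid_corner h (fst e), grid_corner h (snd e)))"
  define E where "E = seg ` boundary_edges F"
  have inj: "inj_on seg (boundary_edges F)"
  proof (rule inj_onI)
    fix e1 e2 assume "seg e1 = seg e2"
    then have "fst e1 = fst e2" "snd e1 = snd e2"
      unfolding seg_def using grid_corner_inj[OF h] by auto
    then show "e1 = e2" by (rule prod_eqI)
  qed
  have segE: "closed_segment a b = grid_segment h e" if "(a, b) = seg e" for a b e
    using that unfolding seg_def grid_segment_def by simp
  have edge: "\<exists>e s. (a, b) = seg e \<and> e \<in> boundary_edges F \<and> s \<in> F \<and> e \<in> square_edges s"
    if "(a, b) \<in> E" for a b
    using that unfolding E_def boundary_edges_def by blast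
  define Good where "Good = {y. (\<forall>(a, b)\<in>E. y \<notin> closed_segment a b) \<and>
        (\<forall>\<phi>. \<phi> holomorphic_on V \<longrightarrow>
          (\<Sum>(a, b)\<in>E. contour_integral (linepath a b) (\<lambda>\<zeta>. \<phi> \<zeta> / (\<zeta> - y))) = 2 * pi * \<i> * \<phi> y)}"
  have box_Good: "grid_box h s0 \<subseteq> Good" if s0: "s0 \<in> F" for s0
  proof
    fix y assume y: "y \<in> grid_box h s0"
    have off_cycle: "y \<notin> closed_segment a b" if abE: "(a, b) \<in> E" for a b
    proof
      assume ab: "y \<in> closed_segment a b"
      obtain e s where e: "(a, b) = seg e" "s \<in> F" "e \<in> square_edges s" using edge[OF abE] by blast
      have yseg: "y \<in> grid_segment h e" using ab segE[OF e(1)] by simp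
      then have "s = s0" using grid_box_unique[OF h y] grid_segment_subset_square[OF h e(3)] by blast
      then show False using grid_segment_disjoint_box[OF h e(3)] yseg y by blast
    qed
    have "(\<Sum>(a, b)\<in>E. contour_integral (linepath a b) (\<lambda>\<zeta>. \<phi> \<zeta> / (\<zeta> - y))) = 2 * pi * \<i> * \<phi> y"
      if "\<phi> holomorphic_on V" for \<phi>
      unfolding E_def using Cauchy_integral_boundary_edges[OF h finF s0 y FV that]
      by (subst sum.reindex[OF inj]) (simp add: seg_def)
    then show "y \<in> Good" unfolding Good_def using off_cycle by auto
  qed
  have "K \<subseteq> closure Good"
  proof
    fix w assume w: "w \<in> K"
    define s0 where "s0 = (\<lfloor>Re w / h\<rfloor>, \<lfloor>Im w / h\<rfloor>)"
    have ws0: "w \<in> grid_square h s0" unfolding s0_def by (rule in_grid_square_floor[OF h])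
    then have "s0 \<in> F" using w unfolding F_def by blast
    then have "grid_square h s0 \<subseteq> closure Good"
      using box_Good closure_mono closure_grid_box[OF h] by metis
    then show "w \<in> closure Good" using ws0 by blast
  qed
  then show ?thesis
    unfolding Good_def
  proof (rule that[rotated -1])
    show "finite E"
      unfolding E_def boundary_edges_def using finF by (auto intro: finite_subset)
    show "closed_segment a b \<subseteq> V" if ab: "(a, b) \<in> E" for a b
    proof -
      obtain e s where e: "(a, b) = seg e" "s \<in> F" "e \<in> square_edges s" using edge[OF ab] by blast
      show ?thesis
        unfolding segE[OF e(1)] using grid_segment_subset_square[OF h e(3)] FV[OF e(2)] by (rule order_trans)
    qed
    show "closed_segment a b \<inter> K = {}" if ab: "(a, b) \<in> E" for a b
    proof -
      obtain e s where e: "(a, b) = seg e" "e \<in> boundary_edges F" using edge[OF ab] by blast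
      obtain s' where "s' \<notin> F" "grid_segment h e \<subseteq> grid_square h s'"
        using boundary_edge_outer_square[OF h e(2)] .
      then show ?thesis using segE[OF e(1)] unfolding F_def by blast
    qed
  qed
qed

section \<open>Approximation by Cauchy kernels\<close>

lemma uniform_Riemann_sums_segment_integrals:
  fixes G :: "'p::metric_space \<Rightarrow> complex \<Rightarrow> complex"
  assumes E: "finite E" and EV: "\<And>a b. (a, b) \<in> E \<Longrightarrow> closed_segment a b \<subseteq> V"
    and EC: "\<And>a b. (a, b) \<in> E \<Longrightarrow> closed_segment a b \<inter> C = {}"
    and P: "compact P" and C: "compact C"
    and G: "continuous_on (P \<times> V) (\<lambda>x. G (fst x) (snd x))" and \<epsilon>: "\<epsilon> > 0"
  obtains T :: "((complex \<times> complex) \<times> nat) set" and \<zeta> c where "finite T"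
    "\<And>t. t \<in> T \<Longrightarrow> \<exists>(a, b)\<in>E. \<zeta> t \<in> closed_segment a b"
    "\<And>p y. p \<in> P \<Longrightarrow> y \<in> C \<Longrightarrow>
       norm ((\<Sum>(a, b)\<in>E. contour_integral (linepath a b) (\<lambda>z. G p z / (z - y)))
             - (\<Sum>t\<in>T. c t * G p (\<zeta> t) / (\<zeta> t - y))) \<le> \<epsilon>"
proof -
  define \<eta> where "\<eta> = \<epsilon> / (real (card E) + 1)"
  have \<eta>: "\<eta> > 0" "real (card E) * \<eta> \<le> \<epsilon>"
    unfolding \<eta>_def using \<epsilon> by (auto simp: field_simps)
  define f where "f = (\<lambda>e::complex \<times> complex. \<lambda>x::'p \<times> complex. \<lambda>t::real.
      G (fst x) (linepath (fst e) (snd e) t) / (linepath (fst e) (snd e) t - snd x) * (snd e - fst e))"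
  have f: "continuous_on ((P \<times> C) \<times> {0..1}) (\<lambda>x. f e (fst x) (snd x))" if e: "e \<in> E" for e
  proof -
    have lin: "continuous_on ((P \<times> C) \<times> {0..1}) (\<lambda>x. linepath (fst e) (snd e) (snd x))"
      unfolding linepath_def by (intro continuous_intros)
    have linS: "linepath (fst e) (snd e) (snd x) \<in> closed_segment (fst e) (snd e)"
      if "x \<in> (P \<times> C) \<times> {0..1}" for x
      using that by (intro linepath_in_path) auto
    have "continuous_on ((P \<times> C) \<times> {0..1}) (\<lambda>x. G (fst (fst x)) (linepath (fst e) (snd e) (snd x)))"
    proof (rule continuous_on_compose2[OF G, where f="\<lambda>x. (fst (fst x), linepath (fst e) (snd e) (snd x))", simplified])
      show "continuous_on ((P \<times> C) \<times> {0..1}) (\<lambda>x. (fst (fst x), linepath (fst e) (snd e) (snd x)))"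
        using lin by (intro continuous_intros) auto
      show "(\<lambda>x. (fst (fst x), linepath (fst e) (snd e) (snd x))) ` ((P \<times> C) \<times> {0..1}) \<subseteq> P \<times> V"
        using linS EV[of "fst e" "snd e"] e by fastforce
    qed
    moreover have "linepath (fst e) (snd e) (snd x) \<noteq> snd (fst x)" if "x \<in> (P \<times> C) \<times> {0..1}" for x
      using EC[of "fst e" "snd e"] linS[OF that] e that by auto
    ultimately show ?thesis unfolding f_def
      by (intro continuous_intros lin) auto
  qed
  have "\<forall>\<^sub>F N in sequentially. \<forall>e\<in>E. \<forall>q\<in>P \<times> C.
           norm (integral {0..1} (f e q) - (\<Sum>k<N. f e q (real k / real N)) / of_nat N) \<le> \<eta>"
    using E f by (intro eventually_ball_finite ballI eventually_uniform_Riemann_sum compact_Times P C \<eta>(1)) auto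
  then obtain N where N: "N \<ge> 1" "\<And>e q. e \<in> E \<Longrightarrow> q \<in> P \<times> C \<Longrightarrow>
           norm (integral {0..1} (f e q) - (\<Sum>k<N. f e q (real k / real N)) / of_nat N) \<le> \<eta>"
    unfolding eventually_sequentially by (metis le_cases nle_le order.refl)
  define T where "T = E \<times> {..<N}"
  define \<zeta> where "\<zeta> = (\<lambda>t::(complex \<times> complex) \<times> nat. linepath (fst (fst t)) (snd (fst t)) (real (snd t) / real N))"
  define c where "c = (\<lambda>t::(complex \<times> complex) \<times> nat. (snd (fst t) - fst (fst t)) / of_nat N)"
  show ?thesis
  proof
    show "finite T" unfolding T_def using E by simp
    show "\<exists>(a, b)\<in>E. \<zeta> t \<in> closed_segment a b" if "t \<in> T" for t
    proof -
      have "real (snd t) / real N \<in> {0..1}" "fst t \<in> E" using that N(1) unfolding T_def by auto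
      then show ?thesis unfolding \<zeta>_def
        by (intro bexI[of _ "fst t"]) (auto simp: case_prod_unfold intro: linepath_in_path)
    qed
    fix p y assume p: "p \<in> P" and y: "y \<in> C"
    have integral: "contour_integral (linepath a b) (\<lambda>z. G p z / (z - y)) = integral {0..1} (f (a, b) (p, y))"
      if ab: "(a, b) \<in> E" for a b
    proof -
      have "continuous_on (closed_segment a b) (\<lambda>z. G p z / (z - y))"
        using EC[OF ab] y p EV[OF ab]
        by (intro continuous_intros continuous_on_compose2[OF G, where f="\<lambda>z. (p, z)", simplified]) auto
      then have "((\<lambda>z. G p z / (z - y)) has_contour_integral contour_integral (linepath a b) (\<lambda>z. G p z / (z - y)))
          (linepath a b)"
        by (intro has_contour_integral_integral contour_integrable_continuous_linepath)
      then show ?thesis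
        unfolding has_contour_integral_linepath f_def by (simp add: integral_unique)
    qed
    have "(\<Sum>t\<in>T. c t * G p (\<zeta> t) / (\<zeta> t - y)) = (\<Sum>e\<in>E. \<Sum>k<N. c (e, k) * G p (\<zeta> (e, k)) / (\<zeta> (e, k) - y))"
      unfolding T_def sum.cartesian_product by (simp add: case_prod_unfold)
    also have "\<dots> = (\<Sum>e\<in>E. \<Sum>k<N. f e (p, y) (real k / real N) / of_nat N)"
      unfolding c_def \<zeta>_def f_def by (intro sum.cong refl) (simp add: ac_simps)
    finally have "(\<Sum>t\<in>T. c t * G p (\<zeta> t) / (\<zeta> t - y)) = (\<Sum>e\<in>E. (\<Sum>k<N. f e (p, y) (real k / real N)) / of_nat N)"
      by (simp add: sum_divide_distrib)
    then have "(\<Sum>(a, b)\<in>E. contour_integral (linepath a b) (\<lambda>z. G p z / (z - y)))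
             - (\<Sum>t\<in>T. c t * G p (\<zeta> t) / (\<zeta> t - y))
        = (\<Sum>e\<in>E. integral {0..1} (f e (p, y)) - (\<Sum>k<N. f e (p, y) (real k / real N)) / of_nat N)"
      using integral by (simp add: sum_subtractf case_prod_unfold)
    also have "norm \<dots> \<le> (\<Sum>e\<in>E. \<eta>)"
      using N(2) p y by (intro order_trans[OF norm_sum] sum_mono) auto
    also have "\<dots> \<le> \<epsilon>" using \<eta>(2) by simp
    finally show "norm ((\<Sum>(a, b)\<in>E. contour_integral (linepath a b) (\<lambda>z. G p z / (z - y)))
             - (\<Sum>t\<in>T. c t * G p (\<zeta> t) / (\<zeta> t - y))) \<le> \<epsilon>" .
  qed
qed

text \<open>Riemann sums of the Cauchy integral over the grid cycle. The parameter p only enters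
  through the values of G p at the nodes, so the coefficients c and the poles \<zeta> do not depend
  on p.\<close>

lemma holomorphic_family_Cauchy_kernel_approx:
  fixes G :: "'p::metric_space \<Rightarrow> complex \<Rightarrow> complex"
  assumes K: "compact K" and V: "open V" and KV: "K \<subseteq> V" and P: "compact P"
    and G: "continuous_on (P \<times> V) (\<lambda>x. G (fst x) (snd x))"
    and hol: "\<And>p. p \<in> P \<Longrightarrow> G p holomorphic_on V" and \<epsilon>: "\<epsilon> > 0"
  obtains T :: "((complex \<times> complex) \<times> nat) set" and \<zeta> c where "finite T"
    "\<And>t. t \<in> T \<Longrightarrow> \<zeta> t \<in> V - K"
    "\<And>p w. p \<in> P \<Longrightarrow> w \<in> K \<Longrightarrow> norm (G p w - (\<Sum>t\<in>T. c t * G p (\<zeta> t) / (\<zeta> t - w))) \<le> \<epsilon>"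
proof -
  obtain E :: "(complex \<times> complex) set" where E: "finite E"
    "\<And>a b. (a, b) \<in> E \<Longrightarrow> closed_segment a b \<subseteq> V"
    "\<And>a b. (a, b) \<in> E \<Longrightarrow> closed_segment a b \<inter> K = {}"
    and "K \<subseteq> closure {y. (\<forall>(a, b)\<in>E. y \<notin> closed_segment a b) \<and>
        (\<forall>\<phi>. \<phi> holomorphic_on V \<longrightarrow>
          (\<Sum>(a, b)\<in>E. contour_integral (linepath a b) (\<lambda>z. \<phi> z / (z - y))) = 2 * pi * \<i> * \<phi> y)}"
    using Cauchy_formula_segments[OF K V KV] by blast
  define Good where "Good = {y. (\<forall>(a, b)\<in>E. y \<notin> closed_segment a b) \<and>
        (\<forall>\<phi>. \<phi> holomorphic_on V \<longrightarrow>
          (\<Sum>(a, b)\<in>E. contour_integral (linepath a b) (\<lambda>z. \<phi> z / (z - y))) = 2 * pi * \<i> * \<phi> y)}"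
  have dense: "K \<subseteq> closure Good" unfolding Good_def by fact
  define S where "S = (\<Union>(a, b)\<in>E. closed_segment a b)"
  have "compact S" unfolding S_def using E(1) by (intro compact_UN) auto
  moreover have "K \<inter> S = {}" unfolding S_def using E(3) by fastforce
  ultimately obtain d where d: "d > 0" "\<And>x z. x \<in> K \<Longrightarrow> z \<in> S \<Longrightarrow> d \<le> dist x z"
    using separate_compact_closed[OF K compact_imp_closed] by metis
  define C where "C = (\<Union>x\<in>K. cball x (d/2))"
  have C: "compact C" unfolding C_def using K by (rule compact_minkowski_sum_cball)
  have segC: "closed_segment a b \<inter> C = {}" if "(a, b) \<in> E" for a b
  proof -
    have "z \<notin> C" if "z \<in> closed_segment a b" for z
    proof
      assume "z \<in> C"
      then obtain x where "x \<in> K" "dist x z \<le> d/2" unfolding C_def by auto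
      moreover have "z \<in> S" unfolding S_def using \<open>(a, b) \<in> E\<close> that by blast
      ultimately show False using d by fastforce
    qed
    then show ?thesis by blast
  qed
  have pos: "2 * pi * \<epsilon> > 0" using \<epsilon> by simp
  obtain T :: "((complex \<times> complex) \<times> nat) set" and \<zeta> c where T: "finite T"
    "\<And>t. t \<in> T \<Longrightarrow> \<exists>(a, b)\<in>E. \<zeta> t \<in> closed_segment a b"
    and approx: "\<And>p y. p \<in> P \<Longrightarrow> y \<in> C \<Longrightarrow>
       norm ((\<Sum>(a, b)\<in>E. contour_integral (linepath a b) (\<lambda>z. G p z / (z - y)))
             - (\<Sum>t\<in>T. c t * G p (\<zeta> t) / (\<zeta> t - y))) \<le> 2 * pi * \<epsilon>"
    by (rule uniform_Riemann_sums_segment_integrals[OF E(1,2) segC P C G pos]) auto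
  have \<zeta>: "\<zeta> t \<in> V - K" if "t \<in> T" for t
    using T(2)[OF that] E(2,3) by blast
  define A where "A = (\<lambda>p w. \<Sum>t\<in>T. c t / (2 * pi * \<i>) * G p (\<zeta> t) / (\<zeta> t - w))"
  show ?thesis
  proof (rule that[OF T(1) \<zeta>])
    fix p w assume p: "p \<in> P" and w: "w \<in> K"
    have "w \<in> closure Good" using dense w by blast
    then obtain y where y_good: "\<And>n. y n \<in> Good" and y: "y \<longlonglongrightarrow> w"
      unfolding closure_sequential by blast
    have "\<forall>\<^sub>F n in sequentially. dist (y n) w < d/2" using y d(1) by (intro tendstoD) auto
    then have "\<forall>\<^sub>F n in sequentially. norm (G p (y n) - A p (y n)) \<le> \<epsilon>"
    proof (rule eventually_mono)
      fix n assume "dist (y n) w < d/2"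
      then have "y n \<in> C" unfolding C_def by (intro UN_I[OF w]) (simp add: dist_commute)
      have "2 * pi * \<i> * A p (y n) = (\<Sum>t\<in>T. c t * G p (\<zeta> t) / (\<zeta> t - y n))"
        unfolding A_def sum_distrib_left by (intro sum.cong refl) simp
      moreover have "(\<Sum>(a, b)\<in>E. contour_integral (linepath a b) (\<lambda>z. G p z / (z - y n)))
          = 2 * pi * \<i> * G p (y n)"
        using y_good[of n] hol[OF p] unfolding Good_def by blast
      ultimately have "norm (2 * pi * \<i> * (G p (y n) - A p (y n))) \<le> 2 * pi * \<epsilon>"
        using approx[OF p \<open>y n \<in> C\<close>] by (simp add: right_diff_distrib)
      then show "norm (G p (y n) - A p (y n)) \<le> \<epsilon>"
        by (simp add: norm_mult)
    qed
    moreover have "isCont (\<lambda>z. G p z - A p z) w"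
    proof (intro continuous_intros)
      show "isCont (G p) w"
        using holomorphic_on_imp_continuous_on[OF hol[OF p]] V KV w continuous_on_eq_continuous_at by blast
      show "isCont (A p) w"
        unfolding A_def using \<zeta> w by (intro continuous_intros) auto
    qed
    ultimately have "norm (G p w - A p w) \<le> \<epsilon>"
      using isCont_tendsto_compose[OF _ y] by (intro Lim_norm_ubound[of sequentially]) auto
    then show "norm (G p w - (\<Sum>t\<in>T. c t / (2 * pi * \<i>) * G p (\<zeta> t) / (\<zeta> t - w))) \<le> \<epsilon>"
      unfolding A_def .
  qed
qed

section \<open>Inverses of polynomials\<close>

lemma prod_set_neighbourhood:
  assumes K: "\<And>i. compact (K i)" and U: "open U" "prod_set K \<subseteq> U"
  obtains V where "\<And>i. open (V i)" "\<And>i. K i \<subseteq> V i" "prod_set V \<subseteq> U"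
proof -
  obtain \<delta> where \<delta>: "\<delta> > 0" "(\<Union>x\<in>prod_set K. ball x \<delta>) \<subseteq> U"
    using compact_subset_open_imp_ball_epsilon_subset[OF compact_prod_set[OF K] U] by blast
  define r where "r = \<delta> / real CARD('a)"
  have r: "r > 0" unfolding r_def using \<delta> by simp
  define V where "V = (\<lambda>i. \<Union>k\<in>K i. ball k r)"
  show ?thesis
  proof
    show "open (V i)" for i unfolding V_def by auto
    show "K i \<subseteq> V i" for i unfolding V_def using r by force
    show "prod_set V \<subseteq> U"
    proof
      fix z assume z: "z \<in> prod_set V"
      have ex: "\<exists>k. k \<in> K i \<and> dist k (z $ i) < r" for i
        using z unfolding prod_set_def V_def by auto
      define k where "k = (\<chi> i. SOME k. k \<in> K i \<and> dist k (z $ i) < r)"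
      have k: "k $ i \<in> K i" "dist (k $ i) (z $ i) < r" for i
        using someI_ex[OF ex[of i]] unfolding k_def by auto
      have "dist k z \<le> (\<Sum>i\<in>UNIV. norm ((k - z) $ i))"
        unfolding dist_norm norm_vec_def by (rule L2_set_le_sum) auto
      also have "\<dots> < (\<Sum>i\<in>(UNIV::'a set). r)"
        by (rule sum_strict_mono) (use k(2) in \<open>auto simp: dist_norm\<close>)
      also have "\<dots> = \<delta>" unfolding r_def by simp
      finally have "z \<in> ball k \<delta>" by simp
      moreover have "k \<in> prod_set K" unfolding prod_set_def using k(1) by simp
      ultimately show "z \<in> U" using \<delta>(2) by blast
    qed
  qed
qed

definition depends_only_on :: "'n set \<Rightarrow> (complex ^ 'n \<Rightarrow> complex) \<Rightarrow> bool" where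
  "depends_only_on J q \<longleftrightarrow> (\<forall>z w. (\<forall>j\<in>J. z $ j = w $ j) \<longrightarrow> q z = q w)"

lemma depends_only_on_UNIV: "depends_only_on UNIV q"
  unfolding depends_only_on_def by (simp add: vec_eq_iff[symmetric])

lemma depends_only_on_vec_upd:
  fixes q :: "complex ^ 'n \<Rightarrow> complex"
  assumes "depends_only_on (insert d J) q"
  shows "depends_only_on J (\<lambda>z. q (vec_upd z d \<zeta>))"
  unfolding depends_only_on_def
proof (intro allI impI)
  fix z w :: "complex ^ 'n" assume "\<forall>j\<in>J. z $ j = w $ j"
  then have "\<forall>j\<in>insert d J. vec_upd z d \<zeta> $ j = vec_upd w d \<zeta> $ j" by simp
  then show "q (vec_upd z d \<zeta>) = q (vec_upd w d \<zeta>)"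
    using assms unfolding depends_only_on_def by blast
qed

lemma inverse_mpoly_fun_tensor_closure_step:
  assumes K: "\<And>i. compact (K i)" and V: "open (V d)" "\<And>i. K i \<subseteq> V i"
    and q: "q \<in> mpoly_fun" "\<forall>z\<in>prod_set V. q z \<noteq> 0"
    and slices: "\<And>\<zeta>. \<zeta> \<in> V d \<Longrightarrow> (\<lambda>z. 1 / q (vec_upd z d \<zeta>)) \<in> tensor_closure K"
  shows "(\<lambda>z. 1 / q z) \<in> tensor_closure K"
proof -
  define G where "G = (\<lambda>z w. 1 / q (vec_upd z d w))"
  have upd: "vec_upd z d w \<in> prod_set V" if "z \<in> prod_set K" "w \<in> V d" for z w
    using that V(2) unfolding prod_set_def by auto
  have G_cont: "continuous_on (prod_set K \<times> V d) (\<lambda>x. G (fst x) (snd x))"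
    unfolding G_def using q upd
    by (intro continuous_intros continuous_on_compose2[OF continuous_on_mpoly_fun continuous_on_vec_upd])
      auto
  have G_hol: "G z holomorphic_on V d" if "z \<in> prod_set K" for z
    unfolding G_def using q upd[OF that] by (intro holomorphic_intros holomorphic_on_mpoly_fun_vec_upd) auto
  have "(\<lambda>z. 1 / q z) \<in> sup_closure_on (prod_set K) (tensor_closure K)"
  proof (rule sup_closure_on_approxI)
    show "continuous_on (prod_set K) (\<lambda>z. 1 / q z)"
      using q V(2) by (intro continuous_intros continuous_on_mpoly_fun) (auto simp: prod_set_def)
    fix e :: real assume e: "e > 0"
    obtain T :: "((complex \<times> complex) \<times> nat) set" and \<zeta> c where T: "finite T"
      "\<And>t. t \<in> T \<Longrightarrow> \<zeta> t \<in> V d - K d"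
      "\<And>z w. z \<in> prod_set K \<Longrightarrow> w \<in> K d \<Longrightarrow>
         norm (G z w - (\<Sum>t\<in>T. c t * G z (\<zeta> t) / (\<zeta> t - w))) \<le> e/2"
      by (rule holomorphic_family_Cauchy_kernel_approx[where \<epsilon> = "e/2", OF K V(1) V(2) compact_prod_set[OF K] G_cont G_hol])
        (use e in auto)
    define g where "g = (\<lambda>z. \<Sum>t\<in>T. c t * (1 / q (vec_upd z d (\<zeta> t)) * (1 / (\<zeta> t - z $ d))))"
    have "g \<in> tensor_closure K"
      unfolding g_def using T(2)
      by (intro tensor_closure_sum[OF T(1)] tensor_closure_mult[OF K] slices
          subsetD[OF tensor_gen_subset_tensor_closure] tensor_gen_const tensor_gen_inverse) auto
    moreover have "norm (1 / q z - g z) < e" if z: "z \<in> prod_set K" for z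
    proof -
      have "norm (G z (z $ d) - (\<Sum>t\<in>T. c t * G z (\<zeta> t) / (\<zeta> t - z $ d))) \<le> e/2"
        using T(3)[OF z prod_set_nth[OF z]] .
      then show ?thesis using e unfolding G_def g_def by simp
    qed
    ultimately show "\<exists>g\<in>tensor_closure K. \<forall>z\<in>prod_set K. norm (1 / q z - g z) < e"
      by (intro bexI[of _ g]) auto
  qed
  then show ?thesis by (simp only: sup_closure_on_idem)
qed

lemma inverse_mpoly_fun_tensor_closure_depends:
  assumes K: "\<And>i. compact (K i)" and V: "\<And>i. open (V i)" "\<And>i. K i \<subseteq> V i" and J: "finite J"
  shows "q \<in> mpoly_fun \<Longrightarrow> depends_only_on J q \<Longrightarrow> \<forall>z\<in>prod_set V. q z \<noteq> 0 \<Longrightarrow>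
    (\<lambda>z. 1 / q z) \<in> tensor_closure K"
  using J
proof (induction J arbitrary: q rule: finite_induct)
  case empty
  have "q z = q 0" for z using empty.prems(2) unfolding depends_only_on_def by blast
  then have "(\<lambda>z. 1 / q z) = (\<lambda>z. 1 / q 0)" by (intro ext arg_cong[where f = "\<lambda>x. 1 / x"])
  moreover have "(\<lambda>z. 1 / q 0) \<in> tensor_closure K"
    using tensor_gen_subset_tensor_closure tensor_gen_const by blast
  ultimately show ?case by (simp only:)
next
  case (insert d J)
  have "(\<lambda>z. 1 / q (vec_upd z d \<zeta>)) \<in> tensor_closure K" if \<zeta>: "\<zeta> \<in> V d" for \<zeta>
  proof (rule insert.IH)
    show "(\<lambda>z. q (vec_upd z d \<zeta>)) \<in> mpoly_fun" using insert.prems(1) by (rule mpoly_fun_vec_upd)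
    show "depends_only_on J (\<lambda>z. q (vec_upd z d \<zeta>))" using insert.prems(2) by (rule depends_only_on_vec_upd)
    show "\<forall>z\<in>prod_set V. q (vec_upd z d \<zeta>) \<noteq> 0"
      using insert.prems(3) \<zeta> unfolding prod_set_def by simp
  qed
  then show ?case by (rule inverse_mpoly_fun_tensor_closure_step[OF K V(1) V(2) insert.prems(1,3)])
qed

lemma inverse_mpoly_fun_tensor_closure:
  assumes K: "\<And>i. compact (K i)" and q: "q \<in> mpoly_fun" "\<And>z. z \<in> prod_set K \<Longrightarrow> q z \<noteq> 0"
  shows "(\<lambda>z. 1 / q z) \<in> tensor_closure K"
proof -
  have "open {z. q z \<noteq> 0}"
    by (intro open_Collect_neq continuous_on_mpoly_fun[OF q(1)] continuous_on_const)
  moreover have "prod_set K \<subseteq> {z. q z \<noteq> 0}" using q(2) by blast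
  ultimately obtain V where V: "\<And>i. open (V i)" "\<And>i. K i \<subseteq> V i" "prod_set V \<subseteq> {z. q z \<noteq> 0}"
    by (rule prod_set_neighbourhood[OF K]) blast
  show ?thesis
    using V(3) by (intro inverse_mpoly_fun_tensor_closure_depends[OF K V(1,2) finite q(1) depends_only_on_UNIV])
      blast
qed

theorem mainTheorem2:
  fixes K :: "'n::finite \<Rightarrow> complex set"
  assumes "\<And>i. compact (K i)"
  shows "R_multi (prod_set K) = sup_closure_on (prod_set K) (tensor_gen K)"
proof
  show "tensor_closure K \<subseteq> R_multi (prod_set K)"
    using assms by (rule tensor_closure_subset_R_multi)
  have "rat_on (prod_set K) \<subseteq> tensor_closure K"
  proof
    fix f assume "f \<in> rat_on (prod_set K)"
    then obtain p q where pq: "p \<in> mpoly_fun" "q \<in> mpoly_fun" "\<forall>z\<in>prod_set K. q z \<noteq> 0"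
      and f: "f = (\<lambda>z. p z * (1 / q z))"
      unfolding rat_on_def by auto
    have "p \<in> tensor_closure K"
      using pq(1) mpoly_fun_subset_tensor_gen tensor_gen_subset_tensor_closure by blast
    then show "f \<in> tensor_closure K"
      unfolding f using pq(2,3) by (intro tensor_closure_mult[OF assms] inverse_mpoly_fun_tensor_closure[OF assms]) auto
  qed
  then show "R_multi (prod_set K) \<subseteq> tensor_closure K"
    unfolding R_multi_def by (metis sup_closure_on_idem sup_closure_on_mono)
qed

end
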